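(* Let $\mathds{k}$ be an algebraically closed field, $A$ a finite abelian group, $\omega$ a normalized 3-cocycle on $A$ with values in $\mathds{k}^{\times}$, $B$ a finite abelian group, $f:B\to A$ a homomorphism with kernel $K$, and $\phi:B\times B\to\mathds{k}^\times$ a 2-cochain with $d\phi=f^*\omega^{-1}$. Then the function $Bil(\phi):B\times K\rightarrow \mathds{k}^{\times}$ given by $Bil(\phi)(b,k):=\phi(b,k)/\phi(k,b)$ is bilinear.
   Context: For a 2-cochain $\kappa$ on an abelian group, $(d\kappa)(a,b,c)=\kappa(b,c)\kappa(a+b,c)^{-1}\kappa(a,b+c)\kappa(a,b)^{-1}$; $(f^*\omega^{-1})(b,c,d)=\omega(f(b),f(c),f(d))^{-1}$. Normalized means $\omega(a,b,c)=1$ whenever one of $a,b,c$ is $0$. *)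

theory Defs
  imports "HOL-Computational_Algebra.Polynomial"
begin

text \<open>Coboundary of a 2-cochain on an abelian group, with values in the multiplicative
group of a field (values assumed nonzero separately).\<close>
definition d2 :: "('b::ab_group_add \<Rightarrow> 'b \<Rightarrow> 'k::field) \<Rightarrow> 'b \<Rightarrow> 'b \<Rightarrow> 'b \<Rightarrow> 'k" where
  "d2 \<kappa> a b c = \<kappa> b c * inverse (\<kappa> (a + b) c) * \<kappa> a (b + c) * inverse (\<kappa> a b)"

definition d3 :: "('a::ab_group_add \<Rightarrow> 'a \<Rightarrow> 'a \<Rightarrow> 'k::field) \<Rightarrow> 'a \<Rightarrow> 'a \<Rightarrow> 'a \<Rightarrow> 'a \<Rightarrow> 'k" where
  "d3 \<omega> a b c e = \<omega> b c e * inverse (\<omega> (a + b) c e) * \<omega> a (b + c) e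
                  * inverse (\<omega> a b (c + e)) * \<omega> a b c"

definition normalized_3cocycle :: "('a::ab_group_add \<Rightarrow> 'a \<Rightarrow> 'a \<Rightarrow> 'k::field) \<Rightarrow> bool" where
  "normalized_3cocycle \<omega> \<longleftrightarrow>
     (\<forall>a b c. \<omega> a b c \<noteq> 0) \<and>
     (\<forall>a b c e. d3 \<omega> a b c e = 1) \<and>
     (\<forall>a b c. (a = 0 \<or> b = 0 \<or> c = 0) \<longrightarrow> \<omega> a b c = 1)"

definition Bil :: "('b \<Rightarrow> 'b \<Rightarrow> 'k::field) \<Rightarrow> 'b \<Rightarrow> 'b \<Rightarrow> 'k" where
  "Bil \<phi> b k = \<phi> b k / \<phi> k b"

end

theory Submission
  imports Defs
begin

text \<open>For k in the kernel of f, normality of \<omega> makes d\<phi> = 1 on every triple containing k, and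
these cocycle identities alone suffice: each of them lets one solve for a single value of \<phi>,
and substituting three of them into the quotient defining Bil gives the product formula.\<close>

lemma d2_eq_1_iff:
  fixes \<kappa> :: "'b::ab_group_add \<Rightarrow> 'b \<Rightarrow> 'k::field"
  assumes "\<kappa> (a + b) c \<noteq> 0" "\<kappa> a b \<noteq> 0"
  shows "d2 \<kappa> a b c = 1 \<longleftrightarrow> \<kappa> b c * \<kappa> a (b + c) = \<kappa> (a + b) c * \<kappa> a b"
  using assms unfolding d2_def by (auto simp: field_simps)

lemma Bil_add_left:
  fixes \<kappa> :: "'b::ab_group_add \<Rightarrow> 'b \<Rightarrow> 'k::field"
  assumes units: "\<And>x y. \<kappa> x y \<noteq> 0"
    and trivial: "\<And>x y. d2 \<kappa> k x y = 1" "\<And>x y. d2 \<kappa> x k y = 1" "\<And>x y. d2 \<kappa> x y k = 1"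
  shows "Bil \<kappa> (b + b') k = Bil \<kappa> b k * Bil \<kappa> b' k"
proof -
  have "\<kappa> b' k * \<kappa> b (b' + k) = \<kappa> (b + b') k * \<kappa> b b'"
    using trivial(3)[of b b'] by (simp add: d2_eq_1_iff units)
  then have left: "\<kappa> (b + b') k = \<kappa> b' k * \<kappa> b (b' + k) / \<kappa> b b'"
    using units by (simp add: field_simps)
  have "\<kappa> b b' * \<kappa> k (b + b') = \<kappa> (b + k) b' * \<kappa> k b"
    using trivial(1)[of b b'] by (simp add: d2_eq_1_iff units add.commute)
  then have right: "\<kappa> k (b + b') = \<kappa> (b + k) b' * \<kappa> k b / \<kappa> b b'"
    using units by (simp add: field_simps)
  have "\<kappa> k b' * \<kappa> b (b' + k) = \<kappa> (b + k) b' * \<kappa> b k"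
    using trivial(2)[of b b'] by (simp add: d2_eq_1_iff units add.commute)
  then have middle: "\<kappa> b (b' + k) = \<kappa> (b + k) b' * \<kappa> b k / \<kappa> k b'"
    using units by (simp add: field_simps)
  show ?thesis
    unfolding Bil_def left right middle using units by (simp add: field_simps)
qed

lemma Bil_add_right:
  fixes \<kappa> :: "'b::ab_group_add \<Rightarrow> 'b \<Rightarrow> 'k::field"
  assumes units: "\<And>x y. \<kappa> x y \<noteq> 0"
    and trivial: "\<And>x y. d2 \<kappa> k x y = 1" "\<And>x y. d2 \<kappa> x k y = 1"
  shows "Bil \<kappa> b (k + k') = Bil \<kappa> b k * Bil \<kappa> b k'"
proof -
  have "\<kappa> k k' * \<kappa> b (k + k') = \<kappa> (b + k) k' * \<kappa> b k"
    using trivial(2)[of b k'] by (simp add: d2_eq_1_iff units)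
  then have left: "\<kappa> b (k + k') = \<kappa> (b + k) k' * \<kappa> b k / \<kappa> k k'"
    using units by (simp add: field_simps)
  have "\<kappa> k' b * \<kappa> k (k' + b) = \<kappa> (k + k') b * \<kappa> k k'"
    using trivial(1)[of k' b] by (simp add: d2_eq_1_iff units)
  then have right: "\<kappa> (k + k') b = \<kappa> k' b * \<kappa> k (b + k') / \<kappa> k k'"
    using units by (simp add: field_simps add.commute)
  have "\<kappa> b k' * \<kappa> k (b + k') = \<kappa> (k + b) k' * \<kappa> k b"
    using trivial(1)[of b k'] by (simp add: d2_eq_1_iff units)
  then have middle: "\<kappa> k (b + k') = \<kappa> (b + k) k' * \<kappa> k b / \<kappa> b k'"
    using units by (simp add: field_simps add.commute)
  show ?thesis
    unfolding Bil_def left right middle using units by (simp add: field_simps)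
qed

theorem lemma2p1p1:
  fixes \<omega> :: "'a::{ab_group_add,finite} \<Rightarrow> 'a \<Rightarrow> 'a \<Rightarrow> 'k::alg_closed_field"
    and f :: "'b::{ab_group_add,finite} \<Rightarrow> 'a"
    and \<phi> :: "'b \<Rightarrow> 'b \<Rightarrow> 'k"
  assumes cocycle: "normalized_3cocycle \<omega>"
    and hom: "\<And>x y. f (x + y) = f x + f y"
    and phi_units: "\<And>x y. \<phi> x y \<noteq> 0"
    and dphi: "\<And>x y z. d2 \<phi> x y z = inverse (\<omega> (f x) (f y) (f z))"
  shows "(\<forall>b b' k. f k = 0 \<longrightarrow> Bil \<phi> (b + b') k = Bil \<phi> b k * Bil \<phi> b' k) \<and>
         (\<forall>b k k'. f k = 0 \<longrightarrow> f k' = 0 \<longrightarrow> Bil \<phi> b (k + k') = Bil \<phi> b k * Bil \<phi> b k')"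
proof -
  have normalized: "\<omega> a b c = 1" if "a = 0 \<or> b = 0 \<or> c = 0" for a b c
    using cocycle that unfolding normalized_3cocycle_def by blast
  have trivial: "d2 \<phi> k x y = 1" "d2 \<phi> x k y = 1" "d2 \<phi> x y k = 1" if "f k = 0" for k x y
    using that by (simp_all add: dphi normalized)
  show ?thesis
    using Bil_add_left[where \<kappa> = \<phi>, OF phi_units trivial]
      Bil_add_right[where \<kappa> = \<phi>, OF phi_units trivial(1,2)] by blast
qed

end
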